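(* Let $R$ be a commutative ring containing $\mathbb{Q}$, let $\boldsymbol{a}\in H_R$ with $a_0\in R^*$, and let $\boldsymbol{\lambda}^{(-1)}:=\lambda_{+,0}(\boldsymbol{a})^{(-1)}$. Put $\bar\lambda_i=\boldsymbol{\lambda}^{(-1)}[i]/i!$ for $i\ge1$. Then for all $n\ge0$, $$\boldsymbol{\lambda}^{(-1)}[n+1]=n!\sum_{k=0}^{n}\frac{\boldsymbol{a}^{-1}[k]}{k!}\,B_{n,k}\big(\bar\lambda_1,\dots,\bar\lambda_{n-k+1}\big).$$
   Context: $H_R$ is the set of sequences $\boldsymbol{a}=(a_n)_{n\ge0}$ in $R$, $\boldsymbol{a}[n]=a_n$. $\boldsymbol{a}^{-1}$ is the inverse for the Hurwitz product $(\boldsymbol{a}\star\boldsymbol{b})_n=\sum_{h=0}^n\binom{n}{h}a_hb_{n-h}$ (identity $(1,0,0,\dots)$). For $\boldsymbol{b}$ with $b_0=0$, $\boldsymbol{a}\circ\boldsymbol{b}$ is the sequence whose exponential generating function is $A(B(t))$, where $A(t)=\sum_n a_nt^n/n!$, $B(t)=\sum_n b_nt^n/n!$; its identity is $(0,1,0,\dots)$ and $\boldsymbol{c}^{(-1)}$ denotes the $\circ$-inverse (which exists iff $c_0=0$, $c_1\in R^*$). $\lambda_{+,0}(a_0,a_1,\dots)=(0,a_0,a_1,\dots)$. The partial ordinary Bell polynomials $B_{n,k}$ are defined by $B_{0,0}=1$, $B_{n,0}=0$ ($n\ge1$), $B_{0,k}=0$ ($k\ge1$), and $\big(\sum_{n\ge1}y_nz^n\big)^k=\sum_{n\ge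 k}B_{n,k}(y_1,\dots,y_{n-k+1})z^n$. *)

theory Defs
  imports "HOL-Computational_Algebra.Formal_Power_Series"
begin

(* Sequences in H_R are functions nat => 'a. *)

definition rinv :: "'a::comm_ring_1 \<Rightarrow> 'a" where
  "rinv x = (THE y. x * y = 1)"

definition hprod :: "(nat \<Rightarrow> 'a::comm_ring_1) \<Rightarrow> (nat \<Rightarrow> 'a) \<Rightarrow> nat \<Rightarrow> 'a" where
  "hprod a b n = (\<Sum>h = 0..n. of_nat (n choose h) * a h * b (n - h))"

definition hone :: "nat \<Rightarrow> 'a::comm_ring_1" where
  "hone n = (if n = 0 then 1 else 0)"

definition hinv :: "(nat \<Rightarrow> 'a::comm_ring_1) \<Rightarrow> nat \<Rightarrow> 'a" where
  "hinv a = (THE b. hprod a b = hone \<and> hprod b a = hone)"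

(* exponential generating function (R contains Q, so 1/n! makes sense) *)
definition egf :: "(nat \<Rightarrow> 'a::comm_ring_1) \<Rightarrow> 'a fps" where
  "egf a = Abs_fps (\<lambda>n. a n * rinv (of_nat (fact n)))"

definition hcomp :: "(nat \<Rightarrow> 'a::comm_ring_1) \<Rightarrow> (nat \<Rightarrow> 'a) \<Rightarrow> nat \<Rightarrow> 'a" where
  "hcomp a b n = of_nat (fact n) * fps_nth (egf a oo egf b) n"

definition hcid :: "nat \<Rightarrow> 'a::comm_ring_1" where
  "hcid n = (if n = 1 then 1 else 0)"

definition hcinv :: "(nat \<Rightarrow> 'a::comm_ring_1) \<Rightarrow> nat \<Rightarrow> 'a" where
  "hcinv c = (THE d. d 0 = 0 \<and> hcomp c d = hcid \<and> hcomp d c = hcid)"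

(* lambda_{+,0}(a_0,a_1,...) = (0,a_0,a_1,...) *)
definition lshift :: "(nat \<Rightarrow> 'a::zero) \<Rightarrow> nat \<Rightarrow> 'a" where
  "lshift a n = (if n = 0 then 0 else a (n - 1))"

(* partial ordinary Bell polynomial B_{n,k}(y_1,...,y_{n-k+1}):
   coefficient of z^n in (sum_{i>=1} y_i z^i)^k *)
definition obell :: "nat \<Rightarrow> nat \<Rightarrow> (nat \<Rightarrow> 'a::comm_ring_1) \<Rightarrow> 'a" where
  "obell n k y = fps_nth (Abs_fps (\<lambda>i. if i = 0 then 0 else y i) ^ k) n"

end

(*
  Passing to exponential generating functions turns the Hurwitz product into the product and
  \<open>\<circ>\<close> into composition of power series. If \<open>A\<close> is the egf of \<open>a\<close>, the egf \<open>L\<close> of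
  \<open>\<lambda>\<^sub>+\<^sub>,\<^sub>0(a)\<close> satisfies \<open>L' = A\<close>. Differentiating \<open>L \<circ> I = t\<close> for the compositional
  inverse \<open>I\<close> gives \<open>I' = A\<^sup>-\<^sup>1 \<circ> I\<close>, and the coefficient of \<open>t\<^sup>n\<close> of a composition
  \<open>\<Sum>\<^sub>k b\<^sub>k I\<^sup>k\<close> is the ordinary Bell polynomial sum.
*)
theory Submission
  imports Defs
begin

unbundle fps_syntax

section \<open>Composition of formal power series over a commutative ring\<close>

text \<open>The library proves these facts for integral domains only; the proofs need no more than
  commutativity.\<close>

lemma fps_compose_mult_nth_comm_ring:
  fixes a b c d :: "'a::comm_ring_1 fps"
  assumes c0: "c $ 0 = 0" and d0: "d $ 0 = 0"
  shows "((a oo c) * (b oo d)) $ n =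
    (\<Sum>(k,m)\<in>{(k,m). k + m \<le> n}. a $ k * b $ m * (c^k * d^m) $ n)"
  (is "?l = ?r")
proof -
  let ?S = "{(k::nat, m::nat). k + m \<le> n}"
  have fin: "finite ?S"
    by (rule finite_subset[of _ "{0..n} \<times> {0..n}"]) auto
  have "?r = (\<Sum>(k,m)\<in>?S. \<Sum>j = 0..n. a $ k * b $ m * (c^k $ j * d^m $ (n - j)))"
    by (simp add: fps_mult_nth sum_distrib_left)
  also have "\<dots> = (\<Sum>i = 0..n. \<Sum>(k,m)\<in>?S. a $ k * c^k $ i * b $ m * d^m $ (n - i))"
    unfolding sum.swap [where A = "{0..n}"] by (auto simp: field_simps intro: sum.cong)
  also have "\<dots> = (\<Sum>i = 0..n. \<Sum>q = 0..i. \<Sum>j = 0..n - i. a $ q * c^q $ i * (b $ j * d^j $ (n - i)))"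
  proof (rule sum.cong[OF refl])
    fix i assume "i \<in> {0..n}"
    have vanish: "a $ k * c^k $ i * b $ m * d^m $ (n - i) = 0" if "i < k \<or> n - i < m" for k m
      using that startsby_zero_power_prefix[OF c0] startsby_zero_power_prefix[OF d0] by auto
    have "(\<Sum>(k,m)\<in>?S. a $ k * c^k $ i * b $ m * d^m $ (n - i)) =
        (\<Sum>(k,m)\<in>{0..i} \<times> {0..n - i}. a $ k * c^k $ i * b $ m * d^m $ (n - i))"
      using \<open>i \<in> {0..n}\<close> by (intro sum.mono_neutral_right[OF fin]) (auto simp: not_le intro: vanish)
    then show "(\<Sum>(k,m)\<in>?S. a $ k * c^k $ i * b $ m * d^m $ (n - i)) =
        (\<Sum>q = 0..i. \<Sum>j = 0..n - i. a $ q * c^q $ i * (b $ j * d^j $ (n - i)))"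
      by (simp add: sum.cartesian_product mult.assoc)
  qed
  also have "\<dots> = ?l"
    by (simp add: fps_mult_nth fps_compose_nth sum_product)
  finally show ?thesis by simp
qed

lemma fps_compose_mult_distrib_comm_ring:
  fixes a b c :: "'a::comm_ring_1 fps"
  assumes c0: "c $ 0 = 0"
  shows "(a * b) oo c = (a oo c) * (b oo c)"
proof (rule fps_ext)
  fix n
  have "((a oo c) * (b oo c)) $ n = (\<Sum>s = 0..n. \<Sum>i = 0..s. a $ i * b $ (s - i) * c^s $ n)"
    unfolding fps_compose_mult_nth_comm_ring[OF c0 c0] power_add[symmetric]
    by (rule sum_pair_less_iff)
  then show "((a * b) oo c) $ n = ((a oo c) * (b oo c)) $ n"
    by (simp add: fps_compose_nth fps_mult_nth sum_distrib_right)
qed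

lemma fps_compose_power_comm_ring:
  fixes a c :: "'a::comm_ring_1 fps"
  assumes "c $ 0 = 0"
  shows "(a oo c)^n = a^n oo c"
  by (induct n) (simp_all add: fps_compose_mult_distrib_comm_ring[OF assms])

lemma fps_compose_assoc_comm_ring:
  fixes a b c :: "'a::comm_ring_1 fps"
  assumes c0: "c $ 0 = 0" and b0: "b $ 0 = 0"
  shows "a oo (b oo c) = a oo b oo c"
proof (rule fps_ext)
  fix n
  have "(a oo (b oo c)) $ n = ((\<Sum>i = 0..n. fps_const (a $ i) * b^i) oo c) $ n"
    by (simp add: fps_compose_nth fps_compose_power_comm_ring[OF c0] fps_compose_sum_distrib
        fps_const_mult_apply_left sum_distrib_left mult.assoc fps_sum_nth)
  also have "\<dots> = (\<Sum>i = 0..n. \<Sum>j = 0..n. a $ j * (b^j $ i * c^i $ n))"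
    by (simp add: fps_compose_nth fps_sum_nth sum_distrib_right mult.assoc)
  also have "\<dots> = (\<Sum>i = 0..n. \<Sum>j = 0..i. a $ j * (b^j $ i * c^i $ n))"
    by (intro sum.cong[OF refl] sum.mono_neutral_right) (simp_all add: b0 startsby_zero_power_prefix)
  also have "\<dots> = (a oo b oo c) $ n"
    by (simp add: fps_compose_nth sum_distrib_right mult.assoc)
  finally show "(a oo (b oo c)) $ n = (a oo b oo c) $ n" .
qed

lemma fps_compose_deriv_comm_ring:
  fixes a b :: "'a::comm_ring_1 fps"
  assumes b0: "b $ 0 = 0"
  shows "fps_deriv (a oo b) = (fps_deriv a oo b) * fps_deriv b"
proof (rule fps_ext)
  fix n
  let ?rhs = "\<Sum>i = 0..n. of_nat (i + 1) * a $ (i + 1) *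
    (\<Sum>j = 0..n. b^i $ j * of_nat (n - j + 1) * b $ (n - j + 1))"
  have "fps_deriv (a oo b) $ n = (\<Sum>i = 0..Suc n. a $ i * fps_deriv (b^i) $ n)"
    by (simp add: fps_compose_def field_simps sum_distrib_left del: of_nat_Suc)
  also have "\<dots> = (\<Sum>i = 0..Suc n. a $ i * (fps_const (of_nat i) * (fps_deriv b * b^(i - 1))) $ n)"
    by (simp add: field_simps fps_deriv_power del: fps_mult_left_const_nth of_nat_Suc)
  also have "\<dots> = (\<Sum>i = 0..Suc n. of_nat i * a $ i * (b^(i - 1) * fps_deriv b) $ n)"
    unfolding fps_mult_left_const_nth by (simp add: field_simps)
  also have "\<dots> = (\<Sum>i = 1..Suc n. of_nat i * a $ i * (b^(i - 1) * fps_deriv b) $ n)"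
    by (intro sum.mono_neutral_right) (auto simp: mult_delta_left not_le)
  also have "\<dots> = ?rhs"
    unfolding fps_mult_nth fps_deriv_nth
    by (rule sum.reindex_cong[of Suc]) (simp_all add: mult.assoc)
  finally have lhs: "fps_deriv (a oo b) $ n = ?rhs" .
  have "((fps_deriv a oo b) * fps_deriv b) $ n =
      (\<Sum>i = 0..n. fps_deriv b $ (n - i) * (fps_deriv a oo b) $ i)"
    unfolding fps_mult_nth by (simp add: ac_simps)
  also have "\<dots> = (\<Sum>i = 0..n. \<Sum>j = 0..n.
      of_nat (n - i + 1) * b $ (n - i + 1) * of_nat (j + 1) * a $ (j + 1) * b^j $ i)"
    unfolding fps_deriv_nth fps_compose_nth sum_distrib_left mult.assoc
    by (auto simp: subset_eq b0 startsby_zero_power_prefix sum.mono_neutral_left intro: sum.cong)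
  also have "\<dots> = ?rhs"
    unfolding sum_distrib_left by (subst sum.swap) (force intro: sum.cong)
  finally show "fps_deriv (a oo b) $ n = ((fps_deriv a oo b) * fps_deriv b) $ n"
    using lhs by simp
qed

lemma fps_compose_nth_obell:
  fixes a c :: "'a::comm_ring_1 fps"
  assumes "c $ 0 = 0"
  shows "(a oo c) $ n = (\<Sum>k = 0..n. a $ k * obell n k (($) c))"
proof -
  have "Abs_fps (\<lambda>i. if i = 0 then 0 else c $ i) = c"
    using assms by (simp add: fps_eq_iff)
  then show ?thesis by (simp add: fps_compose_nth obell_def)
qed

lemma rinv_eq:
  fixes x :: "'a::comm_ring_1"
  assumes "x * y = 1"
  shows "rinv x = y"
  unfolding rinv_def
proof (rule the_equality)
  fix z assume "x * z = 1"
  then have "y * (x * z) = y" by simp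
  then show "z = y" using assms by (simp add: mult.assoc[symmetric] mult.commute)
qed (fact assms)

lemma mult_rinv:
  fixes x :: "'a::comm_ring_1"
  assumes "x * y = 1"
  shows "x * rinv x = 1"
  using rinv_eq[OF assms] assms by simp

lemma rinv_mult:
  fixes x u :: "'a::comm_ring_1"
  assumes "x * y = 1" "u * v = 1"
  shows "rinv (x * u) = rinv x * rinv u"
proof -
  have "(x * u) * (y * v) = 1" using assms by (metis mult.assoc mult.left_commute mult_1_right)
  then show ?thesis using rinv_eq[OF assms(1)] rinv_eq[OF assms(2)] rinv_eq by metis
qed

section \<open>A compositional inverse over a commutative ring\<close>

text \<open>The library's \<open>compinv\<close> divides by \<open>a $ 1\<close> and so needs a field; here it is only
  assumed to be a unit.\<close>

fun ring_compinv :: "'a::comm_ring_1 fps \<Rightarrow> nat \<Rightarrow> 'a" where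
  "ring_compinv a 0 = 0"
| "ring_compinv a (Suc n) =
    (fps_X $ Suc n - (\<Sum>i = 0..n. ring_compinv a i * (a^i) $ Suc n)) * rinv ((a $ 1)^Suc n)"

definition fps_ring_inv :: "'a::comm_ring_1 fps \<Rightarrow> 'a fps" where
  "fps_ring_inv a = Abs_fps (ring_compinv a)"

lemma fps_ring_inv_nth_0 [simp]: "fps_ring_inv a $ 0 = 0"
  by (simp add: fps_ring_inv_def)

lemma fps_ring_inv_nth_1:
  fixes a :: "'a::comm_ring_1 fps"
  assumes "a $ 1 * w = 1"
  shows "fps_ring_inv a $ 1 * a $ 1 = 1"
  using mult_rinv[OF assms] by (simp add: fps_ring_inv_def mult.commute)

lemma fps_ring_inv_left:
  fixes a :: "'a::comm_ring_1 fps"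
  assumes a0: "a $ 0 = 0" and a1: "a $ 1 * w = 1"
  shows "fps_ring_inv a oo a = fps_X"
proof (rule fps_ext)
  fix n
  show "(fps_ring_inv a oo a) $ n = fps_X $ n"
  proof (cases n)
    case 0
    then show ?thesis using a0 by (simp add: fps_compose_nth)
  next
    case (Suc m)
    let ?s = "\<Sum>i = 0..m. ring_compinv a i * (a^i) $ Suc m"
    have "(a $ 1)^Suc m * w^Suc m = 1"
      using a1 by (metis power_mult_distrib power_one)
    then have "rinv ((a $ 1)^Suc m) * (a $ 1)^Suc m = 1"
      using mult_rinv by (metis mult.commute)
    then have "ring_compinv a (Suc m) * (a $ 1)^Suc m = fps_X $ Suc m - ?s"
      by (simp only: ring_compinv.simps mult.assoc mult_1_right)
    moreover have "(fps_ring_inv a oo a) $ Suc m = ?s + ring_compinv a (Suc m) * (a $ 1)^Suc m"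
      by (simp add: fps_compose_nth fps_ring_inv_def startsby_zero_power_nth_same[OF a0]
          del: power_Suc)
    ultimately show ?thesis using Suc by simp
  qed
qed

lemma fps_ring_inv_right:
  fixes a :: "'a::comm_ring_1 fps"
  assumes a0: "a $ 0 = 0" and a1: "a $ 1 * w = 1"
  shows "a oo fps_ring_inv a = fps_X"
proof -
  let ?I = "fps_ring_inv a"
  let ?J = "fps_ring_inv ?I"
  have JI: "?J oo ?I = fps_X"
    by (rule fps_ring_inv_left[OF fps_ring_inv_nth_0 fps_ring_inv_nth_1[OF a1]])
  have "a = fps_X oo a" using a0 by simp
  also have "\<dots> = ?J oo (?I oo a)" by (simp add: JI fps_compose_assoc_comm_ring[OF a0])
  also have "\<dots> = ?J" by (simp add: fps_ring_inv_left[OF a0 a1])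
  finally show ?thesis using JI by simp
qed

lemma fps_ring_inv_unique:
  fixes a f :: "'a::comm_ring_1 fps"
  assumes a0: "a $ 0 = 0" and a1: "a $ 1 * w = 1" and f: "f oo a = fps_X"
  shows "f = fps_ring_inv a"
proof -
  have "f = f oo (a oo fps_ring_inv a)" by (simp add: fps_ring_inv_right[OF a0 a1])
  also have "\<dots> = (f oo a) oo fps_ring_inv a" by (rule fps_compose_assoc_comm_ring[OF _ a0]) simp
  finally show ?thesis by (simp add: f)
qed

lemma fps_deriv_compose_inverse:
  fixes L I B :: "'a::comm_ring_1 fps"
  assumes I0: "I $ 0 = 0" and LI: "L oo I = fps_X" and B: "fps_deriv L * B = 1"
  shows "fps_deriv I = B oo I"
proof -
  have "(fps_deriv L oo I) * fps_deriv I = 1"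
    using arg_cong[OF LI, of fps_deriv] by (simp add: fps_compose_deriv_comm_ring[OF I0])
  moreover have "(B oo I) * (fps_deriv L oo I) = 1"
    using B by (simp add: fps_compose_mult_distrib_comm_ring[OF I0, symmetric] mult.commute)
  ultimately show ?thesis by (metis mult.assoc mult_1_left mult_1_right)
qed

section \<open>Exponential generating functions\<close>

lemma egf_nth: "egf a $ n = a n * rinv (of_nat (fact n))"
  by (simp add: egf_def)

lemma egf_hone: "egf hone = 1"
  by (simp add: fps_eq_iff egf_nth hone_def rinv_eq)

lemma egf_hcid: "egf hcid = fps_X"
  by (simp add: fps_eq_iff egf_nth hcid_def rinv_eq)

context
  assumes nat_invertible: "\<And>m::nat. m > 0 \<Longrightarrow> \<exists>y::'a::comm_ring_1. of_nat m * y = 1"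
begin

lemma of_nat_mult_rinv: "m > 0 \<Longrightarrow> (of_nat m :: 'a) * rinv (of_nat m) = 1"
  using nat_invertible mult_rinv by blast

lemma fact_mult_egf_nth: "of_nat (fact n) * egf a $ n = (a n :: 'a)"
  by (simp add: egf_nth mult.left_commute of_nat_mult_rinv)

lemma egf_inj: "egf (a :: nat \<Rightarrow> 'a) = egf b \<Longrightarrow> a = b"
  by (rule ext) (metis fact_mult_egf_nth)

lemma egf_fact_mult_nth: "egf (\<lambda>n. of_nat (fact n) * (F :: 'a fps) $ n) = F"
  by (simp add: fps_eq_iff egf_nth mult.commute mult.left_commute of_nat_mult_rinv)

lemma rinv_of_nat_mult:
  "p > 0 \<Longrightarrow> q > 0 \<Longrightarrow> rinv (of_nat (p * q) :: 'a) = rinv (of_nat p) * rinv (of_nat q)"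
  using rinv_mult[OF of_nat_mult_rinv of_nat_mult_rinv] by simp

lemma binomial_mult_rinv_fact:
  assumes "h \<le> n"
  shows "(of_nat (n choose h) :: 'a) * rinv (of_nat (fact n)) =
    rinv (of_nat (fact h)) * rinv (of_nat (fact (n - h)))"
proof -
  have "fact n = (n choose h) * (fact h * fact (n - h))"
    using binomial_fact_lemma[OF assms] by (simp add: mult.commute)
  then have "rinv (of_nat (fact n) :: 'a) =
      rinv (of_nat (n choose h)) * (rinv (of_nat (fact h)) * rinv (of_nat (fact (n - h))))"
    using assms by (simp only: rinv_of_nat_mult fact_gt_zero zero_less_binomial mult_pos_pos)
  then show ?thesis
    using of_nat_mult_rinv[of "n choose h"] assms by (simp add: mult.assoc[symmetric])
qed

lemma egf_hprod: "egf (hprod a b) = egf a * (egf b :: 'a fps)"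
proof (rule fps_ext)
  fix n
  have "egf (hprod a b) $ n =
      (\<Sum>h = 0..n. of_nat (n choose h) * rinv (of_nat (fact n)) * (a h * b (n - h)))"
    by (simp add: egf_nth hprod_def sum_distrib_left sum_distrib_right mult_ac)
  also have "\<dots> = (\<Sum>h = 0..n. egf a $ h * egf b $ (n - h))"
  proof (rule sum.cong[OF refl])
    fix h assume "h \<in> {0..n}"
    then have "h \<le> n" by simp
    then show "of_nat (n choose h) * rinv (of_nat (fact n)) * (a h * b (n - h)) =
        egf a $ h * egf b $ (n - h)"
      unfolding binomial_mult_rinv_fact[OF \<open>h \<le> n\<close>] egf_nth by (simp add: mult_ac)
  qed
  finally show "egf (hprod a b) $ n = (egf a * egf b) $ n"
    by (simp add: fps_mult_nth)
qed

lemma egf_hcomp: "egf (hcomp c d) = egf c oo (egf d :: 'a fps)"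
  unfolding hcomp_def by (rule egf_fact_mult_nth)

lemma fps_deriv_egf: "fps_deriv (egf a) = egf (\<lambda>n. a (Suc n) :: 'a)"
proof (rule fps_ext)
  fix n
  have "(of_nat (fact (Suc n)) :: 'a) = of_nat (Suc n) * of_nat (fact n)"
    by (simp only: fact_Suc of_nat_mult of_nat_id)
  then have "of_nat (fact n) * (rinv (of_nat (fact (Suc n))) * of_nat (Suc n)) = (1 :: 'a)"
    using of_nat_mult_rinv[of "fact (Suc n)"] by (metis mult.assoc mult.commute fact_gt_zero)
  then have "rinv (of_nat (fact n)) = rinv (of_nat (fact (Suc n))) * (of_nat (Suc n) :: 'a)"
    by (rule rinv_eq)
  then show "fps_deriv (egf a) $ n = egf (\<lambda>n. a (Suc n)) $ n"
    by (simp add: egf_nth mult_ac del: of_nat_Suc fact_Suc)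
qed

lemma egf_hinv:
  fixes a :: "nat \<Rightarrow> 'a"
  assumes y: "a 0 * y = 1"
  shows "egf a * egf (hinv a) = 1"
proof -
  define B where "B = fps_right_inverse (egf a) y"
  have AB: "egf a * B = 1"
    unfolding B_def by (rule fps_right_inverse) (simp add: egf_nth rinv_eq y)
  define b where "b = (\<lambda>n. of_nat (fact n) * B $ n)"
  have eb: "egf b = B" unfolding b_def by (rule egf_fact_mult_nth)
  have "hinv a = b"
    unfolding hinv_def
  proof (rule the_equality)
    have "egf (hprod a b) = egf hone" "egf (hprod b a) = egf hone"
      using AB by (simp_all only: egf_hprod egf_hone eb mult.commute[of B])
    then show "hprod a b = hone \<and> hprod b a = hone" by (simp add: egf_inj)
  next
    fix b' assume "hprod a b' = hone \<and> hprod b' a = hone"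
    then have ab': "egf a * egf b' = 1" by (simp add: egf_hprod[symmetric] egf_hone)
    have "egf b' = (B * egf a) * egf b'" using AB by (simp add: mult.commute)
    also have "\<dots> = B" using ab' by (simp add: mult.assoc)
    finally have "egf b' = B" .
    then show "b' = b" by (intro egf_inj) (simp add: eb)
  qed
  then show ?thesis by (simp add: eb AB)
qed

lemma egf_hcinv:
  fixes c :: "nat \<Rightarrow> 'a"
  assumes c0: "c 0 = 0" and c1: "c 1 * w = 1"
  shows "egf (hcinv c) = fps_ring_inv (egf c)"
proof -
  let ?C = "egf c" and ?d = "\<lambda>n. of_nat (fact n) * fps_ring_inv (egf c) $ n"
  have C0: "?C $ 0 = 0" using c0 by (simp add: egf_nth)
  have C1: "?C $ 1 * w = 1" using c1 by (simp add: egf_nth rinv_eq)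
  have "hcinv c = ?d"
    unfolding hcinv_def
  proof (rule the_equality)
    show "?d 0 = 0 \<and> hcomp c ?d = hcid \<and> hcomp ?d c = hcid"
      by (auto intro!: egf_inj simp: egf_hcomp egf_hcid egf_fact_mult_nth
          fps_ring_inv_left[OF C0 C1] fps_ring_inv_right[OF C0 C1])
  next
    fix d assume "d 0 = 0 \<and> hcomp c d = hcid \<and> hcomp d c = hcid"
    then have "egf d oo ?C = fps_X" by (simp add: egf_hcomp[symmetric] egf_hcid)
    then have "egf d = fps_ring_inv ?C" by (rule fps_ring_inv_unique[OF C0 C1])
    then show "d = ?d" by (intro egf_inj) (simp add: egf_fact_mult_nth)
  qed
  then show ?thesis by (simp add: egf_fact_mult_nth)
qed

end

theorem mainTheorem2:
  fixes a :: "nat \<Rightarrow> 'a::comm_ring_1"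
  assumes QR: "\<And>m::nat. m > 0 \<Longrightarrow> \<exists>y::'a. of_nat m * y = 1"
    and a0: "\<exists>y. a 0 * y = 1"
  shows "hcinv (lshift a) (Suc n) =
    of_nat (fact n) * (\<Sum>k = 0..n. hinv a k * rinv (of_nat (fact k)) *
       obell n k (\<lambda>i. hcinv (lshift a) i * rinv (of_nat (fact i))))"
proof -
  obtain y where y: "a 0 * y = 1" using a0 by blast
  define L where "L = egf (lshift a)"
  define I where "I = egf (hcinv (lshift a))"
  have L0: "L $ 0 = 0" and L1: "L $ 1 * y = 1"
    using y by (simp_all add: L_def egf_nth lshift_def rinv_eq)
  have I: "I = fps_ring_inv L"
    unfolding I_def L_def by (rule egf_hcinv[OF QR, of _ y]) (simp_all add: lshift_def y)
  then have I0: "I $ 0 = 0" by simp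
  have "fps_deriv L = egf a"
    by (simp add: L_def fps_deriv_egf[OF QR] lshift_def)
  moreover have "egf a * egf (hinv a) = 1"
    using QR y by (rule egf_hinv)
  ultimately have "fps_deriv L * egf (hinv a) = 1" by simp
  then have "fps_deriv I = egf (hinv a) oo I"
    using I fps_ring_inv_right[OF L0 L1] by (intro fps_deriv_compose_inverse) simp_all
  then have "hcinv (lshift a) (Suc n) = of_nat (fact n) * (egf (hinv a) oo I) $ n"
    using fact_mult_egf_nth[OF QR, where a = "\<lambda>n. hcinv (lshift a) (Suc n)"]
    by (simp add: I_def fps_deriv_egf[OF QR])
  also have "\<dots> = of_nat (fact n) * (\<Sum>k = 0..n. egf (hinv a) $ k * obell n k (($) I))"
    by (simp add: fps_compose_nth_obell[OF I0])
  also have "\<dots> = of_nat (fact n) * (\<Sum>k = 0..n. hinv a k * rinv (of_nat (fact k)) *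
       obell n k (\<lambda>i. hcinv (lshift a) i * rinv (of_nat (fact i))))"
    by (simp add: I_def egf_nth[abs_def])
  finally show ?thesis .
qed

end
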